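(* Let $\mathrm{M}=\langle e_1+I,\ e_2+I,\ A\rangle$, where $e_1,e_2$ are the standard basis vectors of $E^2$ and $A=\begin{pmatrix}0&1\\1&0\end{pmatrix}$ is the linear map transposing $e_1$ and $e_2$. Then $$N_A(\mathrm{M})=\{b+B : b_1-b_2\in\mathbb Z \text{ and } B\in\langle -I, A\rangle\},$$ where $b=(b_1,b_2)$.
   Context: Affine maps of $E^2$ are written $b+B$ (meaning $x\mapsto b+Bx$, $b\in E^2$, $B\in\mathrm{GL}(2,\mathbb R)$); $b+I$ is translation by $b$. $N_A(\mathrm{M})$ denotes the normalizer of $\mathrm{M}$ in the group of affine transformations of $E^2$. (Here $\mathrm{M}$ is a 2-space group of type $\ast\times$, i.e. $cm$, and $E^2/\mathrm{M}$ is a Möbius band.) *)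

theory Defs
  imports "HOL-Analysis.Analysis"
begin

definition aff :: "real^2 \<Rightarrow> real^2^2 \<Rightarrow> (real^2 \<Rightarrow> real^2)" where
  "aff b B = (\<lambda>x. b + B *v x)"

definition affine_group :: "(real^2 \<Rightarrow> real^2) set" where
  "affine_group = {aff b B | b B. invertible B}"

inductive_set gen_group :: "('a \<Rightarrow> 'a) set \<Rightarrow> ('a \<Rightarrow> 'a) set" for S where
  gen_id: "id \<in> gen_group S"
| gen_gen: "g \<in> S \<Longrightarrow> g \<in> gen_group S"
| gen_comp: "f \<in> gen_group S \<Longrightarrow> g \<in> gen_group S \<Longrightarrow> f \<circ> g \<in> gen_group S"
| gen_inv: "f \<in> gen_group S \<Longrightarrow> inv f \<in> gen_group S"

definition affine_normalizer :: "(real^2 \<Rightarrow> real^2) set \<Rightarrow> (real^2 \<Rightarrow> real^2) set" where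
  "affine_normalizer M = {f \<in> affine_group. (\<lambda>m. f \<circ> m \<circ> inv f) ` M = M}"

definition swapA :: "real^2^2" where
  "swapA = (\<chi> i j. if i = j then 0 else 1)"

definition I2 :: "real^2^2" where
  "I2 = mat 1"

end

theory Submission
  imports Defs
begin

text \<open>
  The group M consists of the maps v + C with v \<in> \<int> \<times> \<int> and C \<in> {I, A}. Conjugation by
  f = b + B sends the translation e_j + I to B e_j + I and sends A to
  (b - B A B\<inverse> b) + B A B\<inverse>. So if f normalizes M, the columns of B are integral;
  since B A B\<inverse> \<noteq> I it equals A, so B commutes with A and b - A b, whose coordinates
  are \<plusminus>(b_1 - b_2), is integral. The same argument for f\<inverse> makes B\<inverse> integral, hence
  \<bar>det B\<bar> = 1. An integral matrix commuting with A has the form [[p, q], [q, p]] with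
  determinant (p + q)(p - q), which forces B \<in> {\<plusminus>I, \<plusminus>A}. Conversely, for such B and b the
  conjugate of v + C is (B v + b - C b) + C, which again lies in M.
\<close>

lemma vec2_eq_iff: "(v::real^2) = w \<longleftrightarrow> v$1 = w$1 \<and> v$2 = w$2"
  by (auto simp: vec_eq_iff forall_2)

lemma mat2_eq_iff:
  "(M::real^2^2) = N \<longleftrightarrow> M$1$1 = N$1$1 \<and> M$1$2 = N$1$2 \<and> M$2$1 = N$2$1 \<and> M$2$2 = N$2$2"
  by (auto simp: vec_eq_iff forall_2)

lemma matrix_matrix_mult_2: "((M::real^2^2) ** N) $ i $ j = M$i$1 * N$1$j + M$i$2 * N$2$j"
  by (simp add: matrix_matrix_mult_def sum_2)

lemma matrix_vector_mult_2: "((M::real^2^2) *v v) $ i = M$i$1 * v$1 + M$i$2 * v$2"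
  by (simp add: matrix_vector_mult_def sum_2)

lemma swapA_nth [simp]: "swapA$1$1 = 0" "swapA$1$2 = 1" "swapA$2$1 = 1" "swapA$2$2 = 0"
  by (simp_all add: swapA_def)

lemma I2_nth [simp]: "I2$1$1 = 1" "I2$1$2 = 0" "I2$2$1 = 0" "I2$2$2 = 1"
  by (simp_all add: I2_def mat_def)

lemma I2_simps [simp]: "I2 *v v = v" "I2 ** X = X" "X ** I2 = X"
  by (simp_all add: I2_def)

lemma swapA_mult_swapA [simp]: "swapA ** swapA = I2"
  by (simp add: mat2_eq_iff matrix_matrix_mult_2)

lemma swapA_neq_I2: "swapA \<noteq> I2"
  by (simp add: mat2_eq_iff)

lemma matrix_vector_mult_uminus_right: "(A::real^'n^'m) *v (- x) = - (A *v x)"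
  using matrix_vector_mult_diff_distrib [of A 0 x] by simp

lemma aff_comp: "aff b B \<circ> aff c C = aff (b + B *v c) (B ** C)"
  by (auto simp: aff_def fun_eq_iff matrix_vector_mul_assoc matrix_vector_right_distrib)

lemma aff_0_I2: "aff 0 I2 = id"
  by (auto simp: aff_def fun_eq_iff)

lemma aff_eq_iff: "aff b B = aff c C \<longleftrightarrow> b = c \<and> B = C"
proof
  assume eq: "aff b B = aff c C"
  then have "b = c"
    by (metis aff_def add.right_neutral matrix_vector_mult_0_right)
  with eq have "B *v x = C *v x" for x
    by (metis aff_def add_left_cancel)
  with \<open>b = c\<close> show "b = c \<and> B = C"
    by (simp add: matrix_eq)
qed simp

lemma
  assumes "B ** Bi = I2" "Bi ** B = I2"
  shows aff_comp_inverse: "aff b B \<circ> aff (- (Bi *v b)) Bi = id"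
    and aff_inverse_comp: "aff (- (Bi *v b)) Bi \<circ> aff b B = id"
  using assms
  by (simp_all add: aff_comp aff_0_I2 [symmetric] aff_eq_iff matrix_vector_mul_assoc
      matrix_vector_mult_uminus_right)

lemma inv_aff:
  assumes "B ** Bi = I2" "Bi ** B = I2"
  shows "inv (aff b B) = aff (- (Bi *v b)) Bi"
  using assms by (intro inv_unique_comp aff_comp_inverse aff_inverse_comp)

lemma bij_aff:
  assumes "B ** Bi = I2" "Bi ** B = I2"
  shows "bij (aff b B)"
  by (rule o_bij [OF aff_inverse_comp [OF assms] aff_comp_inverse [OF assms]])

lemma aff_conj:
  assumes "B ** Bi = I2" "Bi ** B = I2"
  shows "aff b B \<circ> aff v C \<circ> inv (aff b B)
           = aff (b + B *v v - (B ** C ** Bi) *v b) (B ** C ** Bi)"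
  using assms
  by (simp add: inv_aff aff_comp aff_eq_iff matrix_vector_mult_uminus_right
      matrix_vector_mul_assoc matrix_vector_right_distrib matrix_mul_assoc)

definition integral_vec :: "real^'n \<Rightarrow> bool" where
  "integral_vec v \<longleftrightarrow> (\<forall>i. v $ i \<in> \<int>)"

definition integral_mat :: "real^'n^'m \<Rightarrow> bool" where
  "integral_mat A \<longleftrightarrow> (\<forall>i j. A $ i $ j \<in> \<int>)"

lemma integral_vec_2: "integral_vec (v::real^2) \<longleftrightarrow> v$1 \<in> \<int> \<and> v$2 \<in> \<int>"
  by (simp add: integral_vec_def forall_2)

lemma integral_mat_2:
  "integral_mat (A::real^2^2) \<longleftrightarrow> A$1$1 \<in> \<int> \<and> A$1$2 \<in> \<int> \<and> A$2$1 \<in> \<int> \<and> A$2$2 \<in> \<int>"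
  by (simp add: integral_mat_def forall_2)

lemma integral_vec_add: "integral_vec v \<Longrightarrow> integral_vec w \<Longrightarrow> integral_vec (v + w)"
  by (simp add: integral_vec_def)

lemma integral_vec_uminus: "integral_vec v \<Longrightarrow> integral_vec (- v)"
  by (simp add: integral_vec_def)

lemma integral_vec_zero: "integral_vec 0"
  by (simp add: integral_vec_def)

lemma integral_vec_axis: "integral_vec (axis i 1)"
  by (simp add: integral_vec_def axis_def)

lemma integral_mat_vector_mult: "integral_mat A \<Longrightarrow> integral_vec v \<Longrightarrow> integral_vec (A *v v)"
  by (auto simp: integral_mat_def integral_vec_def matrix_vector_mult_def)

lemma integral_mat_iff_columns: "integral_mat A \<longleftrightarrow> (\<forall>j. integral_vec (A *v axis j 1))"
  by (auto simp: integral_mat_def integral_vec_def matrix_vector_mult_basis column_def)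

lemma integral_det: "integral_mat A \<Longrightarrow> det A \<in> \<int>"
  unfolding integral_mat_def det_def by (intro Ints_sum Ints_mult Ints_prod) auto

lemma abs_det_integral_inverse:
  assumes "integral_mat A" "integral_mat A'" "A ** A' = mat 1"
  shows "\<bar>det A\<bar> = 1"
proof -
  obtain m n where "det A = of_int m" "det A' = of_int n"
    using integral_det assms(1,2) by (metis Ints_cases)
  moreover have "det A * det A' = 1"
    using assms(3) by (metis det_I det_mul)
  ultimately have "m * n = 1"
    by (metis of_int_eq_1_iff of_int_mult)
  then show ?thesis
    using \<open>det A = of_int m\<close> by (auto simp: zmult_eq_1_iff)
qed

text \<open>The second clause is written with \<open>inv (inv f)\<close> so that it is the first one for \<open>inv f\<close>.\<close>

lemma conj_image_eq_iff:
  assumes "bij f"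
  shows "(\<lambda>m. f \<circ> m \<circ> inv f) ` M = M \<longleftrightarrow>
           (\<forall>m\<in>M. f \<circ> m \<circ> inv f \<in> M) \<and> (\<forall>m\<in>M. inv f \<circ> m \<circ> inv (inv f) \<in> M)"
proof -
  have conj_cancel: "inv f \<circ> (f \<circ> m \<circ> inv f) \<circ> f = m" "f \<circ> (inv f \<circ> m \<circ> f) \<circ> inv f = m" for m
    using assms by (simp_all add: fun_eq_iff bij_is_inj bij_is_surj surj_f_inv_f)
  show ?thesis
    unfolding inv_inv_eq [OF assms]
  proof
    assume image_eq: "(\<lambda>m. f \<circ> m \<circ> inv f) ` M = M"
    have "inv f \<circ> m \<circ> f \<in> M" if "m \<in> M" for m
    proof -
      obtain m' where "m' \<in> M" "m = f \<circ> m' \<circ> inv f"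
        using image_eq \<open>m \<in> M\<close> by blast
      then show ?thesis
        by (simp only: conj_cancel)
    qed
    then show "(\<forall>m\<in>M. f \<circ> m \<circ> inv f \<in> M) \<and> (\<forall>m\<in>M. inv f \<circ> m \<circ> f \<in> M)"
      using image_eq by blast
  next
    assume conj_into: "(\<forall>m\<in>M. f \<circ> m \<circ> inv f \<in> M) \<and> (\<forall>m\<in>M. inv f \<circ> m \<circ> f \<in> M)"
    show "(\<lambda>m. f \<circ> m \<circ> inv f) ` M = M"
    proof
      show "M \<subseteq> (\<lambda>m. f \<circ> m \<circ> inv f) ` M"
      proof
        fix m
        assume "m \<in> M"
        then have "f \<circ> (inv f \<circ> m \<circ> f) \<circ> inv f \<in> (\<lambda>m. f \<circ> m \<circ> inv f) ` M"
          using conj_into by blast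
        then show "m \<in> (\<lambda>m. f \<circ> m \<circ> inv f) ` M"
          by (simp only: conj_cancel)
      qed
    qed (use conj_into in blast)
  qed
qed

lemma gen_group_least:
  assumes "S \<subseteq> H" "id \<in> H"
    and "\<And>f g. f \<in> H \<Longrightarrow> g \<in> H \<Longrightarrow> f \<circ> g \<in> H"
    and "\<And>f. f \<in> H \<Longrightarrow> inv f \<in> H"
  shows "gen_group S \<subseteq> H"
proof
  show "f \<in> H" if "f \<in> gen_group S" for f
    using that by induction (use assms in blast)+
qed

lemma funpow_in_gen_group: "g \<in> gen_group S \<Longrightarrow> g ^^ n \<in> gen_group S"
  by (induction n) (simp_all add: gen_group.gen_id gen_group.gen_comp funpow_Suc_right)

lemma aff_translation_funpow: "aff a I2 ^^ n = aff (of_nat n *\<^sub>R a) I2"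
  by (induction n) (simp_all add: aff_0_I2 funpow_Suc_right aff_comp scaleR_add_left)

lemma aff_translation_int_in_gen_group:
  assumes "aff a I2 \<in> gen_group S"
  shows "aff (of_int n *\<^sub>R a) I2 \<in> gen_group S"
proof (cases "n \<ge> 0")
  case True
  then show ?thesis
    using funpow_in_gen_group [OF assms, of "nat n"] by (simp add: aff_translation_funpow)
next
  case False
  have "inv (aff (of_nat (nat (- n)) *\<^sub>R a) I2) = aff (of_int n *\<^sub>R a) I2"
    using False by (simp add: inv_aff)
  then show ?thesis
    using funpow_in_gen_group [OF assms, of "nat (- n)"]
    by (metis aff_translation_funpow gen_group.gen_inv)
qed

definition klein4 :: "(real^2^2) set" where
  "klein4 = {I2, - I2, swapA, - swapA}"

lemma klein4_mult: "B \<in> klein4 \<Longrightarrow> C \<in> klein4 \<Longrightarrow> B ** C \<in> klein4"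
  unfolding klein4_def insert_iff empty_iff
  by (elim disjE FalseE; simp add: mat2_eq_iff matrix_matrix_mult_2)

lemma klein4_mult_self: "B \<in> klein4 \<Longrightarrow> B ** B = I2"
  unfolding klein4_def insert_iff empty_iff
  by (elim disjE FalseE; simp add: mat2_eq_iff matrix_matrix_mult_2)

lemma klein4_commutes_swapA: "B \<in> klein4 \<Longrightarrow> B ** swapA = swapA ** B"
  unfolding klein4_def insert_iff empty_iff
  by (elim disjE FalseE; simp add: mat2_eq_iff matrix_matrix_mult_2)

lemma integral_mat_klein4: "B \<in> klein4 \<Longrightarrow> integral_mat B"
  unfolding klein4_def by (auto simp: integral_mat_2)

lemma klein4_if_commutes_swapA:
  assumes "integral_mat B" "B ** swapA = swapA ** B" "\<bar>det B\<bar> = 1"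
  shows "B \<in> klein4"
proof -
  have "(B ** swapA)$1$1 = (swapA ** B)$1$1" "(B ** swapA)$1$2 = (swapA ** B)$1$2"
    by (simp_all only: assms(2))
  then have sym: "B$2$2 = B$1$1" "B$2$1 = B$1$2"
    by (simp_all add: matrix_matrix_mult_2)
  obtain p q where p: "B$1$1 = of_int p" and q: "B$1$2 = of_int q"
    using assms(1) by (metis integral_mat_2 Ints_cases)
  have "real_of_int \<bar>(p + q) * (p - q)\<bar> = 1"
    using assms(3) by (simp add: det_2 sym p q algebra_simps)
  then have "\<bar>p + q\<bar> * \<bar>p - q\<bar> = 1"
    unfolding of_int_eq_1_iff abs_mult .
  then have "\<bar>p + q\<bar> = 1" "\<bar>p - q\<bar> = 1"
    by (auto simp: zmult_eq_1_iff)
  then have "(p = 1 \<and> q = 0) \<or> (p = -1 \<and> q = 0) \<or> (p = 0 \<and> q = 1) \<or> (p = 0 \<and> q = -1)"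
    by arith
  then show ?thesis
    unfolding klein4_def by (auto simp: mat2_eq_iff sym p q)
qed

lemma aff_0_in_gen_group_klein4_iff:
  "aff 0 B \<in> gen_group {aff 0 (- I2), aff 0 swapA} \<longleftrightarrow> B \<in> klein4"
proof
  have "gen_group {aff 0 (- I2), aff 0 swapA} \<subseteq> aff 0 ` klein4"
  proof (rule gen_group_least)
    show "id \<in> aff 0 ` klein4"
      by (simp add: aff_0_I2 [symmetric] klein4_def)
    show "f \<circ> g \<in> aff 0 ` klein4" if "f \<in> aff 0 ` klein4" "g \<in> aff 0 ` klein4" for f g
      using that klein4_mult by (auto simp: aff_comp)
    show "inv f \<in> aff 0 ` klein4" if "f \<in> aff 0 ` klein4" for f
      using that inv_aff [OF klein4_mult_self klein4_mult_self] by auto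
  qed (simp add: klein4_def)
  then show "B \<in> klein4" if "aff 0 B \<in> gen_group {aff 0 (- I2), aff 0 swapA}"
    using that by (auto simp: aff_eq_iff)
next
  let ?G = "gen_group {aff 0 (- I2), aff 0 swapA}"
  have gens: "aff 0 (- I2) \<in> ?G" "aff 0 swapA \<in> ?G"
    by (simp_all add: gen_group.gen_gen)
  have "aff 0 (- swapA) = aff 0 (- I2) \<circ> aff 0 swapA"
    by (simp add: aff_comp aff_eq_iff mat2_eq_iff matrix_matrix_mult_2)
  then have "aff 0 (- swapA) \<in> ?G"
    using gens gen_group.gen_comp by metis
  moreover have "aff 0 I2 \<in> ?G"
    by (simp add: aff_0_I2 gen_group.gen_id)
  ultimately show "aff 0 B \<in> ?G" if "B \<in> klein4"
    using that gens unfolding klein4_def by auto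
qed

definition cm_group :: "(real^2 \<Rightarrow> real^2) set" where
  "cm_group = {aff v C | v C. integral_vec v \<and> C \<in> {I2, swapA}}"

lemma cm_groupE:
  assumes "f \<in> cm_group"
  obtains v C where "f = aff v C" "integral_vec v" "C \<in> {I2, swapA}"
  using assms unfolding cm_group_def by blast

lemma aff_in_cm_group_iff: "aff v C \<in> cm_group \<longleftrightarrow> integral_vec v \<and> C \<in> {I2, swapA}"
  by (auto simp: cm_group_def aff_eq_iff)

lemma cm_group_comp:
  assumes "f \<in> cm_group" "g \<in> cm_group"
  shows "f \<circ> g \<in> cm_group"
proof -
  obtain v C w D where "f = aff v C" "integral_vec v" "C \<in> {I2, swapA}"
    and "g = aff w D" "integral_vec w" "D \<in> {I2, swapA}"
    using assms by (elim cm_groupE)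
  moreover have "integral_mat C"
    using \<open>C \<in> {I2, swapA}\<close> by (auto intro: integral_mat_klein4 simp: klein4_def)
  ultimately show ?thesis
    by (auto simp: aff_comp aff_in_cm_group_iff intro: integral_vec_add integral_mat_vector_mult)
qed

lemma cm_group_inv:
  assumes "f \<in> cm_group"
  shows "inv f \<in> cm_group"
proof -
  obtain v C where "f = aff v C" "integral_vec v" "C \<in> {I2, swapA}"
    using assms by (elim cm_groupE)
  moreover from this have "C ** C = I2" "integral_mat C"
    by (auto intro: integral_mat_klein4 klein4_mult_self simp: klein4_def)
  ultimately show ?thesis
    by (simp add: inv_aff aff_in_cm_group_iff integral_vec_uminus integral_mat_vector_mult)
qed

lemma gen_group_cm_generators:
  "gen_group {aff (axis 1 1) I2, aff (axis 2 1) I2, aff 0 swapA} = cm_group"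
  (is "?G = _")
proof
  show "?G \<subseteq> cm_group"
  proof (rule gen_group_least)
    show "id \<in> cm_group"
      by (metis aff_0_I2 aff_in_cm_group_iff insertI1 integral_vec_zero)
  qed (simp_all add: cm_group_comp cm_group_inv aff_in_cm_group_iff integral_vec_axis
      integral_vec_zero)
next
  show "cm_group \<subseteq> ?G"
  proof (rule subsetI, elim cm_groupE)
    fix f v C
    assume f: "f = aff v C" and "integral_vec v" and C: "C \<in> {I2, swapA}"
    then obtain i j where ij: "v$1 = of_int i" "v$2 = of_int j"
      by (metis integral_vec_2 Ints_cases)
    have "aff v I2 = aff (of_int i *\<^sub>R axis 1 1) I2 \<circ> aff (of_int j *\<^sub>R axis 2 1) I2"
      by (simp add: aff_comp aff_eq_iff vec2_eq_iff ij axis_def)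
    then have "aff v I2 \<in> ?G"
      by (metis aff_translation_int_in_gen_group gen_group.gen_comp gen_group.gen_gen insertI1
          insertI2)
    moreover have "aff v swapA = aff v I2 \<circ> aff 0 swapA"
      by (simp add: aff_comp)
    moreover have "aff 0 swapA \<in> ?G"
      by (simp add: gen_group.gen_gen)
    ultimately show "f \<in> ?G"
      using f C by (auto intro: gen_group.gen_comp)
  qed
qed

lemma integral_vec_diff_swapA_iff: "integral_vec (b - swapA *v b) \<longleftrightarrow> b$1 - b$2 \<in> \<int>"
proof -
  have "(b - swapA *v b)$1 = b$1 - b$2" "(b - swapA *v b)$2 = - (b$1 - b$2)"
    by (simp_all add: matrix_vector_mult_2)
  then show ?thesis
    by (simp only: integral_vec_2 minus_in_Ints_iff conj_absorb)
qed

lemma conj_into_cm_group_imp: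
  assumes inverse: "B ** Bi = I2" "Bi ** B = I2"
    and conj_into: "\<forall>m\<in>cm_group. aff b B \<circ> m \<circ> inv (aff b B) \<in> cm_group"
  shows "integral_mat B \<and> B ** swapA = swapA ** B \<and> b$1 - b$2 \<in> \<int>"
proof -
  have "aff b B \<circ> aff (axis j 1) I2 \<circ> inv (aff b B) = aff (B *v axis j 1) I2" for j
    using aff_conj [OF inverse] inverse by simp
  then have "integral_vec (B *v axis j 1)" for j
    using conj_into by (metis aff_in_cm_group_iff insertI1 integral_vec_axis)
  then have "integral_mat B"
    by (simp add: integral_mat_iff_columns)
  define D where "D = B ** swapA ** Bi"
  have "aff 0 swapA \<in> cm_group"
    by (simp add: aff_in_cm_group_iff integral_vec_zero)
  then have "aff b B \<circ> aff 0 swapA \<circ> inv (aff b B) \<in> cm_group"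
    using conj_into by blast
  then have "aff (b - D *v b) D \<in> cm_group"
    by (simp add: aff_conj [OF inverse] D_def)
  then have D: "integral_vec (b - D *v b)" "D \<in> {I2, swapA}"
    by (simp_all add: aff_in_cm_group_iff)
  have "Bi ** D ** B = (Bi ** B) ** swapA ** (Bi ** B)"
    by (simp only: D_def matrix_mul_assoc)
  then have "Bi ** D ** B = swapA"
    using inverse by simp
  then have "D = swapA"
    using D(2) inverse swapA_neq_I2 by auto
  have "D ** B = (B ** swapA) ** (Bi ** B)"
    by (simp only: D_def matrix_mul_assoc)
  then have "B ** swapA = swapA ** B"
    using inverse \<open>D = swapA\<close> by simp
  with \<open>integral_mat B\<close> D(1) \<open>D = swapA\<close> show ?thesis
    by (simp add: integral_vec_diff_swapA_iff)
qed

lemma conj_into_cm_group_if: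
  assumes "B \<in> klein4" "b$1 - b$2 \<in> \<int>" "m \<in> cm_group"
  shows "aff b B \<circ> m \<circ> inv (aff b B) \<in> cm_group"
proof -
  obtain v C where m: "m = aff v C" "integral_vec v" "C \<in> {I2, swapA}"
    using assms(3) by (elim cm_groupE)
  have BB: "B ** B = I2"
    using assms(1) by (rule klein4_mult_self)
  have "B ** swapA ** B = swapA"
    by (metis BB klein4_commutes_swapA [OF assms(1)] matrix_mul_assoc I2_simps(3))
  then have "B ** C ** B = C"
    using m(3) BB by auto
  then have "aff b B \<circ> m \<circ> inv (aff b B) = aff (B *v v + (b - C *v b)) C"
    using aff_conj [OF BB BB, of b v C] m(1) by (simp add: algebra_simps)
  moreover have "integral_vec (b - C *v b)"
    using m(3) assms(2) by (auto simp: integral_vec_diff_swapA_iff integral_vec_zero)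
  ultimately show ?thesis
    using m(2,3) integral_mat_klein4 [OF assms(1)]
    by (simp add: aff_in_cm_group_iff integral_vec_add integral_mat_vector_mult)
qed

lemma aff_normalizes_cm_group_iff:
  assumes inverse: "B ** Bi = I2" "Bi ** B = I2"
  shows "(\<lambda>m. aff b B \<circ> m \<circ> inv (aff b B)) ` cm_group = cm_group \<longleftrightarrow>
           b$1 - b$2 \<in> \<int> \<and> B \<in> klein4"
proof -
  define c where "c = - (Bi *v b)"
  have inv_aff_b: "inv (aff b B) = aff c Bi"
    unfolding c_def using inv_aff [OF inverse] .
  have "inv (aff c Bi) = aff b B"
    using inv_aff [OF inverse(2,1), of c] inverse
    by (simp add: c_def matrix_vector_mult_uminus_right matrix_vector_mul_assoc)
  then have "(\<lambda>m. aff b B \<circ> m \<circ> inv (aff b B)) ` cm_group = cm_group \<longleftrightarrow>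
      (\<forall>m\<in>cm_group. aff b B \<circ> m \<circ> inv (aff b B) \<in> cm_group) \<and>
      (\<forall>m\<in>cm_group. aff c Bi \<circ> m \<circ> inv (aff c Bi) \<in> cm_group)"
    using conj_image_eq_iff [OF bij_aff [OF inverse], of b cm_group] by (simp only: inv_aff_b)
  also have "\<dots> \<longleftrightarrow> b$1 - b$2 \<in> \<int> \<and> B \<in> klein4"
  proof
    assume "(\<forall>m\<in>cm_group. aff b B \<circ> m \<circ> inv (aff b B) \<in> cm_group) \<and>
      (\<forall>m\<in>cm_group. aff c Bi \<circ> m \<circ> inv (aff c Bi) \<in> cm_group)"
    then have "integral_mat B \<and> B ** swapA = swapA ** B \<and> b$1 - b$2 \<in> \<int>" "integral_mat Bi"
      using conj_into_cm_group_imp [OF inverse] conj_into_cm_group_imp [OF inverse(2,1)] by blast+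
    moreover from this have "\<bar>det B\<bar> = 1"
      using abs_det_integral_inverse inverse(1) unfolding I2_def by blast
    ultimately show "b$1 - b$2 \<in> \<int> \<and> B \<in> klein4"
      using klein4_if_commutes_swapA by blast
  next
    assume b: "b$1 - b$2 \<in> \<int> \<and> B \<in> klein4"
    then have "Bi = B"
      using inverse(1) klein4_mult_self by (metis I2_simps(2) matrix_mul_assoc)
    then have "c - swapA *v c = - (B *v (b - swapA *v b))"
      using klein4_commutes_swapA b
      by (simp add: c_def matrix_vector_mult_uminus_right matrix_vector_mult_diff_distrib
          matrix_vector_mul_assoc)
    then have "c$1 - c$2 \<in> \<int>"
      using b integral_mat_klein4
      by (metis integral_vec_diff_swapA_iff integral_vec_uminus integral_mat_vector_mult)
    then show "(\<forall>m\<in>cm_group. aff b B \<circ> m \<circ> inv (aff b B) \<in> cm_group) \<and>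
      (\<forall>m\<in>cm_group. aff c Bi \<circ> m \<circ> inv (aff c Bi) \<in> cm_group)"
      using b \<open>Bi = B\<close> conj_into_cm_group_if by blast
  qed
  finally show ?thesis .
qed

lemma affine_normalizer_cm_group:
  "affine_normalizer cm_group = {aff b B | b B. b$1 - b$2 \<in> \<int> \<and> B \<in> klein4}"
proof (intro set_eqI iffI)
  fix f
  assume "f \<in> affine_normalizer cm_group"
  then obtain b B Bi where "f = aff b B" "B ** Bi = I2" "Bi ** B = I2"
    and "(\<lambda>m. f \<circ> m \<circ> inv f) ` cm_group = cm_group"
    unfolding affine_normalizer_def affine_group_def invertible_def I2_def by blast
  then show "f \<in> {aff b B | b B. b$1 - b$2 \<in> \<int> \<and> B \<in> klein4}"
    using aff_normalizes_cm_group_iff by blast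
next
  fix f
  assume "f \<in> {aff b B | b B. b$1 - b$2 \<in> \<int> \<and> B \<in> klein4}"
  then obtain b B where "f = aff b B" "b$1 - b$2 \<in> \<int>" "B \<in> klein4"
    by blast
  moreover from this have "B ** B = I2"
    by (simp add: klein4_mult_self)
  ultimately show "f \<in> affine_normalizer cm_group"
    using aff_normalizes_cm_group_iff [of B B b]
    unfolding affine_normalizer_def affine_group_def invertible_def I2_def by auto
qed

theorem lemma13:
  shows "affine_normalizer
           (gen_group {aff (axis 1 1) I2, aff (axis 2 1) I2, aff 0 swapA})
         = {aff b B | b B. b $ 1 - b $ 2 \<in> \<int> \<and>
              aff 0 B \<in> gen_group {aff 0 (- I2), aff 0 swapA}}"
  using affine_normalizer_cm_group
  by (simp add: gen_group_cm_generators aff_0_in_gen_group_klein4_iff)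

end
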